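(* Let $k\geq 1$ be fixed and $p\neq 0$ real. The inequality $$\frac{2}{k+2}\left( \frac{\sinh x}{x}\right) ^{kp}+\frac{k}{k+2}\left( \frac{\tanh x}{x}\right) ^{p}>1$$ holds for all $x\in (0,\infty)$ if and only if $p>0$ or $p\leq -\dfrac{12}{5(k+2)}$. *)

theory Defs
  imports "HOL-Analysis.Analysis"
begin

end

theory Submission
  imports Defs "HOL-Real_Asymp.Real_Asymp"
begin

text \<open>
  Write \<open>a = sinh x / x\<close> and \<open>b = tanh x / x = a / cosh x\<close>, and let \<open>p\<^sub>0 = -12 / (5 (k + 2))\<close>.
  For \<open>p > 0\<close> weighted AM-GM bounds the left-hand side below by \<open>(a\<^sup>2 b)\<^bsup>kp/(k+2)\<^esup>\<close>, and
  \<open>a\<^sup>2 b > 1\<close> is Lazarevic's inequality \<open>a\<^sup>3 > cosh x\<close>. At \<open>p = p\<^sub>0\<close> the inequality follows, by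
  a one-variable convexity argument in \<open>a\<^bsup>-4/5\<^esup>\<close>, from the power-mean bound
  \<open>a < ((2 + cosh\<^bsup>4/5\<^esup> x) / 3)\<^bsup>5/4\<^esup>\<close>; both hyperbolic bounds hold because the
  corresponding gap vanishes at 0 and has positive derivative. For \<open>p < p\<^sub>0\<close>, concavity of
  \<open>z \<mapsto> z\<^bsup>p\<^sub>0/p\<^esup>\<close> reduces to the case \<open>p\<^sub>0\<close>. Conversely, for \<open>p\<^sub>0 < p < 0\<close> the left-hand side is
  \<open>1 + k p (5 p (k + 2) + 12) x\<^sup>4 / (180 (k + 2)) + o(x\<^sup>4)\<close> near 0, which is below 1.
\<close>

lemma powr_inverse_power:
  fixes c n :: real
  assumes "0 < c"
  shows "(c powr (1 / n)) ^ m = c powr (real m / n)"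
  using assms by (simp add: powr_power)

lemma pos_if_DERIV_pos:
  fixes f f' :: "real \<Rightarrow> real"
  assumes deriv: "\<And>y. (f has_real_derivative f' y) (at y)"
    and pos: "\<And>y. 0 < y \<Longrightarrow> 0 < f' y"
    and "f 0 = 0" and "0 < x"
  shows "0 < f x"
proof -
  have "f 0 < f x"
  proof (rule DERIV_pos_imp_increasing_open[OF \<open>0 < x\<close>])
    show "\<exists>D. (f has_real_derivative D) (at y) \<and> 0 < D" if "0 < y" for y
      using deriv pos that by blast
    show "continuous_on {0..x} f"
      using deriv by (blast intro: DERIV_atLeastAtMost_imp_continuous_on)
  qed
  with \<open>f 0 = 0\<close> show ?thesis by simp
qed

lemma one_less_cosh: "0 < x \<Longrightarrow> 1 < cosh (x::real)"
  using cosh_real_ge_1[of x] cosh_real_one_iff[of x] by linarith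

lemma lazarevic_deriv:
  fixes y :: real
  defines "z \<equiv> cosh y powr (1/3)"
  shows "((\<lambda>y. sinh y * cosh y powr (-1/3) - y) has_real_derivative
           (z^2 - 1)^2 * (2*z^2 + 1) / (3*z^4)) (at y)"
proof (rule DERIV_cong)
  show "((\<lambda>y. sinh y * cosh y powr (-1/3) - y) has_real_derivative
          cosh y * cosh y powr (-1/3) - sinh y ^ 2 * cosh y powr (-4/3) / 3 - 1) (at y)"
    by (auto intro!: derivative_eq_intros simp: power2_eq_square)
  have z: "z > 0" "cosh y = z^3" "cosh y powr (-1/3) = 1 / z" "cosh y powr (-4/3) = 1 / z^4"
    unfolding z_def by (simp_all add: powr_inverse_power powr_minus_divide)
  then have "sinh y ^ 2 = z^6 - 1"
    by (simp add: sinh_square_eq)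
  with z show "cosh y * cosh y powr (-1/3) - sinh y ^ 2 * cosh y powr (-4/3) / 3 - 1
      = (z^2 - 1)^2 * (2*z^2 + 1) / (3*z^4)"
    by (simp add: field_simps) algebra
qed

lemma cosh_less_cube_sinh_div:
  fixes x :: real
  assumes "0 < x"
  shows "cosh x < (sinh x / x)^3"
proof -
  have "0 < sinh x * cosh x powr (-1/3) - x"
  proof (rule pos_if_DERIV_pos[OF lazarevic_deriv _ _ \<open>0 < x\<close>])
    fix y :: real
    assume "0 < y"
    define z where "z = cosh y powr (1/3)"
    have "1 < z"
      unfolding z_def using one_less_cosh[OF \<open>0 < y\<close>] by simp
    then have "1 < z^2"
      by (simp add: one_less_power)
    then show "0 < (z^2 - 1)^2 * (2*z^2 + 1) / (3*z^4)"
      by (intro divide_pos_pos mult_pos_pos) auto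
  qed simp
  define z where "z = cosh x powr (1/3)"
  have "0 < z" "cosh x = z^3" "cosh x powr (-1/3) = 1 / z"
    unfolding z_def by (simp_all add: powr_inverse_power powr_minus_divide)
  with \<open>0 < sinh x * cosh x powr (-1/3) - x\<close> have "x * z < sinh x"
    by (simp add: pos_less_divide_eq)
  then have "(x * z)^3 < sinh x ^ 3"
    using \<open>0 < x\<close> \<open>0 < z\<close> by (intro power_strict_mono) auto
  then have "cosh x * x^3 < sinh x ^ 3"
    using \<open>cosh x = z^3\<close> by (simp add: power_mult_distrib mult.commute)
  then show ?thesis
    using \<open>0 < x\<close> unfolding power_divide by (simp add: pos_less_divide_eq)
qed

lemma one_less_sinh_div:
  fixes x :: real
  assumes "0 < x"
  shows "1 < sinh x / x"
proof -
  have "1 ^ 3 < (sinh x / x)^3"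
    using cosh_less_cube_sinh_div[OF assms] one_less_cosh[OF assms] by simp
  moreover have "0 \<le> sinh x / x"
    using assms by simp
  ultimately show ?thesis
    by (rule power_less_imp_less_base)
qed

lemma tanh_div_eq: "tanh x / x = (sinh x / x) / cosh x"
  by (simp add: tanh_def)

lemma deg20_polynomial_ineq:
  fixes s :: real
  assumes "1 < s"
  shows "243 * (1 + 2 * s ^ 3) ^ 4 < s ^ 2 * (2 + s ^ 2) ^ 9"
proof -
  define u where "u = s - 1"
  have "0 < u"
    using assms unfolding u_def by simp
  have "s ^ 2 * (2 + s ^ 2) ^ 9 - 243 * (1 + 2 * s ^ 3) ^ 4 = u ^ 3 * (43740 + 295245*u
      + 991440*u^2 + 2157192*u^3 + 3368304*u^4 + 3975102*u^5 + 3656528*u^6 + 2678704*u^7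
      + 1591928*u^8 + 781482*u^9 + 321792*u^10 + 111792*u^11 + 32496*u^12 + 7743*u^13
      + 1464*u^14 + 208*u^15 + 20*u^16 + u^17)" (is "_ = u ^ 3 * ?q")
    unfolding u_def by algebra
  moreover have "0 < u ^ 3 * ?q"
    using \<open>0 < u\<close> by (intro mult_pos_pos add_pos_pos) simp_all
  ultimately show ?thesis
    by simp
qed

lemma poly_ratio_less_powr:
  fixes w :: real
  assumes "1 < w"
  shows "(2*w^6 + 1) / (3*w) < ((2 + w^4) / 3) powr (9/4)"
proof (rule power_less_imp_less_base)
  define m where "m = (2 + w^4) / 3"
  have "m > 0" unfolding m_def by (simp add: add_pos_nonneg)
  have "243 * (1 + 2 * w^6)^4 < w^4 * (2 + w^4)^9"
    using deg20_polynomial_ineq[of "w^2"] assms by (simp add: one_less_power flip: power_mult)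
  then have "(2*w^6 + 1)^4 / (81 * w^4) < (2 + w^4)^9 / 19683"
    using assms by (simp add: divide_simps add.commute mult.commute)
  then have "((2*w^6 + 1) / (3*w))^4 < m^9"
    unfolding m_def by (simp add: power_divide power_mult_distrib)
  also have "\<dots> = (m powr (9/4))^4"
    using \<open>m > 0\<close> by (simp add: powr_power)
  finally show "((2*w^6 + 1) / (3*w))^4 < (((2 + w^4) / 3) powr (9/4))^4"
    unfolding m_def .
qed simp

lemma power_mean_gap_deriv:
  fixes y :: real
  defines "w \<equiv> cosh y powr (1/5)"
  shows "((\<lambda>y. y - sinh y * ((2 + cosh y powr (4/5)) / 3) powr (-5/4)) has_real_derivative
           1 - (2*w^6 + 1) / (3*w) * ((2 + w^4) / 3) powr (-9/4)) (at y)"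
proof (rule DERIV_cong)
  have w: "w > 0" "cosh y = w^5" "cosh y powr (4/5) = w^4" "cosh y powr (-1/5) = 1 / w"
    unfolding w_def by (simp_all add: powr_inverse_power powr_minus_divide)
  define m where "m = (2 + w^4) / 3"
  have "m > 0" unfolding m_def by (simp add: add_pos_nonneg)
  show "((\<lambda>y. y - sinh y * ((2 + cosh y powr (4/5)) / 3) powr (-5/4)) has_real_derivative
          1 - cosh y * m powr (-5/4) + sinh y ^ 2 * cosh y powr (-1/5) * m powr (-9/4) / 3) (at y)"
    unfolding m_def w(3)[symmetric]
    by (auto intro!: derivative_eq_intros simp: add_pos_nonneg power2_eq_square)
  have "m powr (-5/4) = m * m powr (-9/4)"
    using \<open>m > 0\<close> by (simp add: powr_mult_base)
  moreover have "sinh y ^ 2 = w^10 - 1"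
    using w(2) by (simp add: sinh_square_eq flip: power_mult)
  ultimately show "1 - cosh y * m powr (-5/4) + sinh y ^ 2 * cosh y powr (-1/5) * m powr (-9/4) / 3
      = 1 - (2*w^6 + 1) / (3*w) * ((2 + w^4) / 3) powr (-9/4)"
    using w unfolding m_def by (simp add: field_simps) algebra
qed

lemma sinh_div_less_power_mean:
  fixes x :: real
  assumes "0 < x"
  shows "sinh x / x < ((2 + cosh x powr (4/5)) / 3) powr (5/4)"
proof -
  have "0 < x - sinh x * ((2 + cosh x powr (4/5)) / 3) powr (-5/4)"
  proof (rule pos_if_DERIV_pos[OF power_mean_gap_deriv _ _ \<open>0 < x\<close>])
    fix y :: real
    assume "0 < y"
    define w where "w = cosh y powr (1/5)"
    define m where "m = (2 + w^4) / 3"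
    have "1 < w"
      unfolding w_def using one_less_cosh[OF \<open>0 < y\<close>] by simp
    have "0 < m"
      unfolding m_def by (simp add: add_pos_nonneg)
    have "(2*w^6 + 1) / (3*w) < m powr (9/4)"
      unfolding m_def using \<open>1 < w\<close> by (rule poly_ratio_less_powr)
    then have "(2*w^6 + 1) / (3*w) * m powr (-9/4) < m powr (9/4) * m powr (-9/4)"
      using \<open>0 < m\<close> by (intro mult_strict_right_mono) simp_all
    also have "\<dots> = 1"
      using \<open>0 < m\<close> by (simp flip: powr_add)
    finally show "0 < 1 - (2 * (cosh y powr (1/5))^6 + 1) / (3 * cosh y powr (1/5))
        * ((2 + (cosh y powr (1/5))^4) / 3) powr (-9/4)"
      unfolding w_def m_def by simp
  qed simp
  moreover have "0 < ((2 + cosh x powr (4/5)) / 3) powr (5/4)"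
    using add_pos_nonneg[of 2 "cosh x powr (4/5)"] by simp
  ultimately show ?thesis
    using assms by (simp add: powr_minus_divide pos_divide_less_eq pos_less_divide_eq mult.commute)
qed

lemma am_gm_three_powr:
  fixes y t :: real
  assumes "0 < y" "y < 3/2" "t \<le> 1"
  shows "y powr (2 - 2*t) \<le> (3 - 2*y) powr (t - 1)"
proof -
  have "1 - y^2 * (3 - 2*y) = (1 - y)^2 * (1 + 2*y)"
    by algebra
  then have "y^2 * (3 - 2*y) \<le> 1"
    using \<open>0 < y\<close> by (smt (verit) mult_nonneg_nonneg zero_le_power2)
  then have "(y^2 * (3 - 2*y)) powr (1 - t) \<le> 1 powr (1 - t)"
    using assms by (intro powr_mono2) auto
  moreover have "(y^2 * (3 - 2*y)) powr (1 - t) = y powr (2 - 2*t) * (3 - 2*y) powr (1 - t)"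
    using assms by (simp add: powr_mult powr_powr flip: powr_numeral)
  ultimately show ?thesis
    using assms by (simp add: powr_diff powr_minus_divide field_simps)
qed

lemma critical_weighted_sum_gt_1:
  fixes A B t :: real
  assumes A: "0 < A" "A \<le> 1" and t: "0 < t" "t \<le> 1" and AB: "3 < 2*A + B"
  shows "1 < 2*t/3 * A powr (3 - 2*t) + (1 - 2*t/3) * B powr t"
proof -
  define g where "g y = 2*t/3 * y powr (3 - 2*t) + (1 - 2*t/3) * (3 - 2*y) powr t" for y
  have "g 1 \<le> g A"
  proof (rule DERIV_nonpos_imp_nonincreasing[OF \<open>A \<le> 1\<close>])
    fix y assume y: "A \<le> y" "y \<le> 1"
    have "(g has_real_derivative
        2*t*(1 - 2*t/3) * (y powr (2 - 2*t) - (3 - 2*y) powr (t - 1))) (at y)"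
      unfolding g_def using y A
      by (auto intro!: derivative_eq_intros simp: algebra_simps) (simp add: field_simps)
    moreover have "y powr (2 - 2*t) \<le> (3 - 2*y) powr (t - 1)"
      using y A t by (intro am_gm_three_powr) auto
    ultimately show "\<exists>D. (g has_real_derivative D) (at y) \<and> D \<le> 0"
      using t by (intro exI conjI) (auto intro!: mult_nonneg_nonpos)
  qed
  moreover have "g 1 = 1"
    unfolding g_def by simp
  moreover have "(1 - 2*t/3) * (3 - 2*A) powr t < (1 - 2*t/3) * B powr t"
    using A t AB by (intro mult_strict_left_mono powr_less_mono2) auto
  ultimately show ?thesis
    unfolding g_def by linarith
qed

lemma weighted_sum_gt_1_of_powr:
  fixes c1 c2 u v s :: real
  assumes c: "0 \<le> c1" "0 \<le> c2" "c1 + c2 = 1" and uv: "0 < u" "0 < v" and s: "0 < s" "s \<le> 1"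
    and gt: "1 < c1 * u powr s + c2 * v powr s"
  shows "1 < c1 * u + c2 * v"
proof -
  have bernoulli: "z powr s \<le> s * z + (1 - s)" if "0 < z" for z
    using Youngs_inequality_0[of s "1 - s" z 1] s that by simp
  have "c1 * u powr s + c2 * v powr s \<le> c1 * (s * u + (1 - s)) + c2 * (s * v + (1 - s))"
    using c uv by (intro add_mono mult_left_mono bernoulli) auto
  also have "\<dots> = s * (c1 * u + c2 * v) + (1 - s) * (c1 + c2)"
    by (simp add: algebra_simps)
  finally have "s * 1 < s * (c1 * u + c2 * v)"
    using gt c by simp
  then show ?thesis
    using s by simp
qed

lemma weighted_powr_sum_gt_1_pos:
  fixes a b k p :: real
  assumes ab: "0 < a" "0 < b" "1 < a^2 * b" and "0 < k" "0 < p"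
  shows "1 < 2/(k+2) * a powr (k*p) + k/(k+2) * b powr p"
proof -
  have "1 < (a^2 * b) powr (k*p/(k+2))"
    using assms by simp
  also have "\<dots> = (a powr (k*p)) powr (2/(k+2)) * (b powr p) powr (k/(k+2))"
    using ab by (simp add: powr_mult powr_powr mult_ac flip: powr_numeral)
  also have "\<dots> \<le> 2/(k+2) * a powr (k*p) + k/(k+2) * b powr p"
    using assms by (intro Youngs_inequality_0) (auto simp flip: add_divide_distrib)
  finally show ?thesis .
qed

lemma critical_powr_sum_gt_1:
  fixes a c k :: real
  assumes "1 < a" "0 < c" and power_mean: "a < ((2 + c powr (4/5)) / 3) powr (5/4)" and "1 \<le> k"
  shows "1 < 2/(k+2) * a powr (k * (-12 / (5*(k+2)))) + k/(k+2) * (a/c) powr (-12 / (5*(k+2)))"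
proof -
  define A where "A = a powr (-4/5)"
  define B where "B = (a/c) powr (-4/5)"
  define t where "t = 3/(k+2)"
  have A: "0 < A" "A \<le> 1"
    using \<open>1 < a\<close> unfolding A_def by (simp_all add: powr_minus_divide ge_one_powr_ge_zero)
  have "a powr (4/5) < (2 + c powr (4/5)) / 3"
    using powr_less_mono2[OF _ _ power_mean, of "4/5"] \<open>1 < a\<close> by (simp add: powr_powr)
  then have "3 < A * (2 + c powr (4/5))"
    using \<open>1 < a\<close> unfolding A_def by (simp add: powr_minus_divide field_simps)
  also have "\<dots> = 2*A + B"
    using assms unfolding A_def B_def by (simp add: powr_divide powr_minus_divide field_simps)
  finally have main: "1 < 2*t/3 * A powr (3 - 2*t) + (1 - 2*t/3) * B powr t"
    using A \<open>1 \<le> k\<close> unfolding t_def by (intro critical_weighted_sum_gt_1) auto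
  have weights: "2*t/3 = 2/(k+2)" "1 - 2*t/3 = k/(k+2)"
    using assms unfolding t_def by (simp_all add: field_simps)
  have powers: "A powr (3 - 2*t) = a powr (k * (-12 / (5*(k+2))))"
    "B powr t = (a/c) powr (-12 / (5*(k+2)))"
    using assms unfolding A_def B_def t_def by (simp_all add: powr_powr field_simps)
  show ?thesis
    using main unfolding weights(2) unfolding weights(1) powers .
qed

definition sinh_tanh_comb :: "real \<Rightarrow> real \<Rightarrow> real \<Rightarrow> real" where
  "sinh_tanh_comb k p x = 2 / (k + 2) * (sinh x / x) powr (k * p) + k / (k + 2) * (tanh x / x) powr p"

lemma sinh_tanh_comb_gt_1_pos:
  assumes "0 < k" "0 < p" "0 < x"
  shows "1 < sinh_tanh_comb k p x"
proof -
  have "0 < sinh x / x"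
    using one_less_sinh_div[OF \<open>0 < x\<close>] by simp
  moreover have "(sinh x / x)^2 * (tanh x / x) = (sinh x / x)^3 / cosh x"
    by (simp add: tanh_div_eq power3_eq_cube power2_eq_square)
  then have "1 < (sinh x / x)^2 * (tanh x / x)"
    using cosh_less_cube_sinh_div[OF \<open>0 < x\<close>] by simp
  ultimately show ?thesis
    unfolding sinh_tanh_comb_def using assms
    by (intro weighted_powr_sum_gt_1_pos) (auto simp: tanh_div_eq)
qed

lemma sinh_tanh_comb_gt_1_critical:
  assumes "1 \<le> k" "0 < x"
  shows "1 < sinh_tanh_comb k (-12 / (5*(k+2))) x"
  unfolding sinh_tanh_comb_def tanh_div_eq using assms
  by (intro critical_powr_sum_gt_1 one_less_sinh_div sinh_div_less_power_mean) auto

lemma sinh_tanh_comb_gt_1_neg: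
  assumes "1 \<le> k" "p \<le> -12 / (5*(k+2))" "0 < x"
  shows "1 < sinh_tanh_comb k p x"
proof -
  define p0 where "p0 = -12 / (5*(k+2))"
  define s where "s = p0 / p"
  have "p0 < 0" "p \<le> p0"
    using assms unfolding p0_def by (simp_all add: divide_neg_pos)
  then have "p < 0"
    by linarith
  have s: "0 < s" "s \<le> 1" "p * s = p0"
    unfolding s_def using \<open>p0 < 0\<close> \<open>p < 0\<close> \<open>p \<le> p0\<close>
    by (simp_all add: divide_neg_neg divide_le_eq_1_neg)
  have "((sinh x / x) powr (k*p)) powr s = (sinh x / x) powr (k*p0)"
    "((tanh x / x) powr p) powr s = (tanh x / x) powr p0"
    using s(3) by (simp_all add: powr_powr mult.assoc)
  then have gt: "1 < 2/(k+2) * ((sinh x / x) powr (k*p)) powr s + k/(k+2) * ((tanh x / x) powr p) powr s"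
    using sinh_tanh_comb_gt_1_critical[OF assms(1,3)]
    unfolding sinh_tanh_comb_def p0_def[symmetric] by simp
  have weights: "0 \<le> 2/(k+2)" "0 \<le> k/(k+2)" "2/(k+2) + k/(k+2) = 1"
    using assms by (simp_all add: add_divide_distrib[symmetric])
  have "0 < (sinh x / x) powr (k*p)" "0 < (tanh x / x) powr p"
    using \<open>0 < x\<close> by simp_all
  then show ?thesis
    unfolding sinh_tanh_comb_def by (rule weighted_sum_gt_1_of_powr[OF weights _ _ s(1,2) gt])
qed

lemma sinh_div_powr_expansion:
  fixes u :: real
  shows "((\<lambda>x::real. ((sinh x / x) powr u - 1 - u * x^2 / 6) / x^4) \<longlongrightarrow> u * (5*u - 2) / 360)
           (at_right 0)"
proof -
  have "((\<lambda>x::real. ((sinh x / x) powr u - 1 - u * x^2 / 6) / x^4) \<longlongrightarrow> (u - 1) * u / 72 + u / 120)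
          (at_right 0)"
    by real_asymp
  then show ?thesis
    by (simp add: field_simps)
qed

lemma tanh_div_powr_expansion:
  fixes u :: real
  shows "((\<lambda>x::real. ((tanh x / x) powr u - 1 + u * x^2 / 3) / x^4) \<longlongrightarrow> u * (5*u + 7) / 90)
           (at_right 0)"
proof -
  have "((\<lambda>x::real. ((tanh x / x) powr u - 1 + u * x^2 / 3) / x^4) \<longlongrightarrow> (u - 1) * u / 18 + 2 * u / 15)
          (at_right 0)"
    by real_asymp
  then show ?thesis
    by (simp add: field_simps)
qed

lemma sinh_tanh_comb_expansion:
  assumes "0 < k"
  shows "((\<lambda>x. (sinh_tanh_comb k p x - 1) / x^4)
          \<longlongrightarrow> k * p * (5 * p * (k+2) + 12) / (180 * (k+2))) (at_right 0)"
proof -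
  have "((\<lambda>x. 2/(k+2) * (((sinh x / x) powr (k*p) - 1 - k*p * x^2 / 6) / x^4)
               + k/(k+2) * (((tanh x / x) powr p - 1 + p * x^2 / 3) / x^4))
        \<longlongrightarrow> 2/(k+2) * (k*p * (5*(k*p) - 2) / 360) + k/(k+2) * (p * (5*p + 7) / 90)) (at_right 0)"
    by (intro tendsto_intros sinh_div_powr_expansion tanh_div_powr_expansion)
  moreover have "2/(k+2) * (k*p * (5*(k*p) - 2) / 360) + k/(k+2) * (p * (5*p + 7) / 90)
      = k * p * (5 * p * (k+2) + 12) / (180 * (k+2))"
    using assms by (simp add: divide_simps) (simp add: algebra_simps)
  moreover have "2/(k+2) * ((A - 1 - k*p * x^2 / 6) / x^4) + k/(k+2) * ((B - 1 + p * x^2 / 3) / x^4)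
      = (2/(k+2) * A + k/(k+2) * B - 1) / x^4" for A B x :: real
  proof -
    \<comment> \<open>the weights are chosen so that the \<open>x\<^sup>2\<close> terms cancel\<close>
    have "2/(k+2) * (A - 1 - k*p * x^2 / 6) + k/(k+2) * (B - 1 + p * x^2 / 3)
        = 2/(k+2) * A + k/(k+2) * B - 1"
      using assms by (simp add: divide_simps) (simp add: algebra_simps)
    then show ?thesis
      by (metis add_divide_distrib times_divide_eq_right)
  qed
  ultimately show ?thesis
    unfolding sinh_tanh_comb_def by simp
qed

lemma sinh_tanh_comb_less_1_near_0:
  assumes "0 < k" "p < 0" "-12 / (5*(k+2)) < p"
  shows "\<exists>x>0. sinh_tanh_comb k p x < 1"
proof -
  have "0 < 5 * p * (k+2) + 12"
    using assms by (simp add: field_simps)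
  then have "k * p * (5 * p * (k+2) + 12) / (180 * (k+2)) < 0"
    using assms by (simp add: divide_neg_pos mult_neg_pos mult_pos_neg)
  then have "\<forall>\<^sub>F x in at_right 0. (sinh_tanh_comb k p x - 1) / x^4 < 0"
    by (rule order_tendstoD(2)[OF sinh_tanh_comb_expansion[OF \<open>0 < k\<close>]])
  moreover have "\<forall>\<^sub>F x in at_right (0::real). 0 < x"
    by (simp add: eventually_at_right_less)
  ultimately have "\<forall>\<^sub>F x in at_right 0. 0 < x \<and> sinh_tanh_comb k p x < 1"
    by eventually_elim (simp add: divide_less_0_iff)
  then show ?thesis
    using eventually_happens'[OF trivial_limit_at_right_real] by blast
qed

theorem theorem3p3:
  fixes k p :: real
  assumes "k \<ge> 1" and "p \<noteq> 0"
  shows "(\<forall>x::real. x > 0 \<longrightarrow>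
            2 / (k + 2) * (sinh x / x) powr (k * p) + k / (k + 2) * (tanh x / x) powr p > 1)
         \<longleftrightarrow> (p > 0 \<or> p \<le> - 12 / (5 * (k + 2)))"
proof -
  have "(\<forall>x. x > 0 \<longrightarrow> sinh_tanh_comb k p x > 1) \<longleftrightarrow> (p > 0 \<or> p \<le> - 12 / (5 * (k + 2)))"
  proof
    assume "\<forall>x. x > 0 \<longrightarrow> sinh_tanh_comb k p x > 1"
    then show "p > 0 \<or> p \<le> - 12 / (5 * (k + 2))"
      using sinh_tanh_comb_less_1_near_0[of k p] assms by force
  next
    assume "p > 0 \<or> p \<le> - 12 / (5 * (k + 2))"
    then show "\<forall>x. x > 0 \<longrightarrow> sinh_tanh_comb k p x > 1"
      using sinh_tanh_comb_gt_1_pos[of k p] sinh_tanh_comb_gt_1_neg[of k p] assms by auto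
  qed
  then show ?thesis
    unfolding sinh_tanh_comb_def .
qed

end
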